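(* Let $(G,d)$ be a $p$-uniformly convex space with $p\in(1,\infty)$ and constant $c>0$, let $D\subset G$ and $T:D\rightrightarrows G$, and let $\tau\in[0,1]$. For $x,y\in D$, $x_+\in T(x)$, $y_+\in T(y)$ put $x_\tau=(1-\tau)x\oplus\tau x_+$ and $y_\tau=(1-\tau)y\oplus\tau y_+$. Then $$d(x_\tau,y_\tau)^p\le(1-\tau)^2d(x,y)^p+\tau^2d(x_+,y_+)^p+2(1-\tau)\tau\,\Delta^{(p,c)}(x,y,x_+,y_+)+\tfrac{2-c}{2}(1-\tau)\tau\big(d(y,x_+)^p+d(x,y_+)^p\big).$$
   Context: $(G,d)$ is uniquely geodesic; $(1-\tau)x\oplus\tau y$ is the point on the geodesic from $x$ to $y$ at distance $\tau d(x,y)$ from $x$. $(G,d)$ is $p$-uniformly convex with constant $c$ if $d(z,(1-\tau)x\oplus\tau y)^p\le(1-\tau)d(z,x)^p+\tau d(z,y)^p-\frac c2\tau(1-\tau)d(x,y)^p$ for all $\tau\in[0,1]$ and $x,y,z\in G$. $\Delta^{(p,c)}(x,y,u,v)=\frac c4\big(d(x,v)^p+d(y,u)^p-d(x,u)^p-d(y,v)^p\big)$. *)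

theory Defs
  imports "HOL-Analysis.Analysis"
begin

definition geodesic_path :: "'a::metric_space \<Rightarrow> 'a \<Rightarrow> (real \<Rightarrow> 'a) \<Rightarrow> bool" where
  "geodesic_path x y \<gamma> \<longleftrightarrow> \<gamma> 0 = x \<and> \<gamma> (dist x y) = y \<and>
     (\<forall>s\<in>{0..dist x y}. \<forall>t\<in>{0..dist x y}. dist (\<gamma> s) (\<gamma> t) = \<bar>s - t\<bar>)"

definition uniquely_geodesic :: "'a::metric_space itself \<Rightarrow> bool" where
  "uniquely_geodesic _ \<longleftrightarrow>
     (\<forall>x y::'a. (\<exists>\<gamma>. geodesic_path x y \<gamma>) \<and>
        (\<forall>\<gamma>1 \<gamma>2. geodesic_path x y \<gamma>1 \<longrightarrow> geodesic_path x y \<gamma>2 \<longrightarrow>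
           (\<forall>t\<in>{0..dist x y}. \<gamma>1 t = \<gamma>2 t)))"

text \<open>geod_comb tau x y = (1-tau) x (+) tau y: the point on the geodesic from x to y
  at distance tau * d(x,y) from x.\<close>
definition geod_comb :: "real \<Rightarrow> 'a::metric_space \<Rightarrow> 'a \<Rightarrow> 'a" where
  "geod_comb \<tau> x y = (SOME \<gamma>. geodesic_path x y \<gamma>) (\<tau> * dist x y)"

definition p_uniformly_convex :: "'a::metric_space itself \<Rightarrow> real \<Rightarrow> real \<Rightarrow> bool" where
  "p_uniformly_convex _ p c \<longleftrightarrow>
     (\<forall>\<tau>\<in>{0..1}. \<forall>x y z::'a.
        dist z (geod_comb \<tau> x y) powr p \<le>
          (1 - \<tau>) * dist z x powr p + \<tau> * dist z y powr p
          - c / 2 * \<tau> * (1 - \<tau>) * dist x y powr p)"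

definition Delta :: "real \<Rightarrow> real \<Rightarrow> 'a::metric_space \<Rightarrow> 'a \<Rightarrow> 'a \<Rightarrow> 'a \<Rightarrow> real" where
  "Delta p c x y u v =
     c / 4 * (dist x v powr p + dist y u powr p - dist x u powr p - dist y v powr p)"

end

theory Submission
  imports Defs
begin

text \<open>Apply uniform convexity three times: first with base point \<open>x\<^sub>\<tau>\<close> on the segment
  from \<open>y\<close> to \<open>y\<^sub>+\<close>, then with base points \<open>y\<close> and \<open>y\<^sub>+\<close> on the segment from \<open>x\<close> to \<open>x\<^sub>+\<close>
  to bound the two distances this produces. The \<open>c\<close>-terms that appear are exactly what
  \<open>Delta p c\<close> and the last summand of the claim recombine into.\<close>

lemma p_uniformly_convexD:
  assumes "p_uniformly_convex TYPE('a::metric_space) p c" and "0 \<le> \<tau>" and "\<tau> \<le> 1"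
  shows "dist z (geod_comb \<tau> x y) powr p \<le>
      (1 - \<tau>) * dist z x powr p + \<tau> * dist (z::'a) y powr p
      - c / 2 * \<tau> * (1 - \<tau>) * dist x y powr p"
  using assms unfolding p_uniformly_convex_def by auto

lemma dist_geod_comb_geod_comb_powr_le:
  fixes x y u v :: "'a::metric_space"
  assumes convex: "p_uniformly_convex TYPE('a) p c" and "0 \<le> \<tau>" and "\<tau> \<le> 1"
  shows "dist (geod_comb \<tau> x u) (geod_comb \<tau> y v) powr p \<le>
      (1 - \<tau>)^2 * dist x y powr p + \<tau>^2 * dist u v powr p
      + (1 - \<tau>) * \<tau> * (dist y u powr p + dist x v powr p)
      - c / 2 * (1 - \<tau>) * \<tau> * (dist x u powr p + dist y v powr p)"
proof -
  define a where "a = geod_comb \<tau> x u"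
  note uc = p_uniformly_convexD[OF convex \<open>0 \<le> \<tau>\<close> \<open>\<tau> \<le> 1\<close>]
  have y_a: "dist y a powr p \<le> (1 - \<tau>) * dist x y powr p + \<tau> * dist y u powr p
      - c / 2 * \<tau> * (1 - \<tau>) * dist x u powr p"
    using uc[of y x u] by (simp add: a_def dist_commute)
  have v_a: "dist v a powr p \<le> (1 - \<tau>) * dist x v powr p + \<tau> * dist u v powr p
      - c / 2 * \<tau> * (1 - \<tau>) * dist x u powr p"
    using uc[of v x u] by (simp add: a_def dist_commute)
  have "dist a (geod_comb \<tau> y v) powr p \<le>
      (1 - \<tau>) * dist y a powr p + \<tau> * dist v a powr p
      - c / 2 * \<tau> * (1 - \<tau>) * dist y v powr p"
    using uc[of a y v] by (simp add: dist_commute)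
  also have "\<dots> \<le>
      (1 - \<tau>) * ((1 - \<tau>) * dist x y powr p + \<tau> * dist y u powr p
        - c / 2 * \<tau> * (1 - \<tau>) * dist x u powr p)
      + \<tau> * ((1 - \<tau>) * dist x v powr p + \<tau> * dist u v powr p
        - c / 2 * \<tau> * (1 - \<tau>) * dist x u powr p)
      - c / 2 * \<tau> * (1 - \<tau>) * dist y v powr p"
    using y_a v_a assms(2,3) by (intro diff_right_mono add_mono mult_left_mono) auto
  also have "\<dots> =
      (1 - \<tau>)^2 * dist x y powr p + \<tau>^2 * dist u v powr p
      + (1 - \<tau>) * \<tau> * (dist y u powr p + dist x v powr p)
      - c / 2 * (1 - \<tau>) * \<tau> * (dist x u powr p + dist y v powr p)"
    by (simp add: power2_eq_square field_simps)
  finally show ?thesis unfolding a_def .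
qed

theorem mainTheorem4:
  fixes D :: "'a::metric_space set" and T :: "'a \<Rightarrow> 'a set"
    and p c \<tau> :: real and x y xp yp :: 'a
  assumes "uniquely_geodesic TYPE('a)"
    and "p_uniformly_convex TYPE('a) p c"
    and "1 < p" and "0 < c"
    and "0 \<le> \<tau>" and "\<tau> \<le> 1"
    and "x \<in> D" and "y \<in> D" and "xp \<in> T x" and "yp \<in> T y"
  shows "dist (geod_comb \<tau> x xp) (geod_comb \<tau> y yp) powr p \<le>
      (1 - \<tau>)^2 * dist x y powr p + \<tau>^2 * dist xp yp powr p
      + 2 * (1 - \<tau>) * \<tau> * Delta p c x y xp yp
      + (2 - c) / 2 * (1 - \<tau>) * \<tau> * (dist y xp powr p + dist x yp powr p)"
proof -
  have "2 * (1 - \<tau>) * \<tau> * Delta p c x y xp yp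
      + (2 - c) / 2 * (1 - \<tau>) * \<tau> * (dist y xp powr p + dist x yp powr p)
    = (1 - \<tau>) * \<tau> * (dist y xp powr p + dist x yp powr p)
      - c / 2 * (1 - \<tau>) * \<tau> * (dist x xp powr p + dist y yp powr p)"
    unfolding Delta_def by (simp add: field_simps)
  then show ?thesis
    using dist_geod_comb_geod_comb_powr_le[OF assms(2,5,6), of x xp y yp] by linarith
qed

end
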